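(* Let $\mathbb{C}$ be a regular category such that for any three effective equivalence relations $\alpha,\beta,\gamma$ on any object $X$ of $\mathbb{C}$ we have $\alpha\cap(\beta\circ\gamma)=(\alpha\cap\beta)\circ(\alpha\cap\gamma)$. Then $\mathbb{C}$ is a majority category.
   Context: A category is regular if it has finite limits and coequalizers of kernel pairs and regular epimorphisms are pullback-stable; morphisms factor as regular epi followed by mono. Relations are subobjects of products; an equivalence relation on $X$ is effective if it is the kernel pair of some morphism out of $X$; $\cap$ denotes intersection (pullback) of subobjects. For $w:S\to W$ and a subobject $A$ of $W$, $w\in_S A$ means $w$ factors through a representative of $A$. The composite $R\circ S$ of relations represented by $(r_1,r_2):R_0\to X\times Y$ and $(s_1,s_2):S_0\to Y\times Z$ is the image of $(r_1p_1,s_2p_2):P\to X\times Z$, $(P,p_1,p_2)$ the pullback of $s_1$ along $r_2$. A ternary relation $R\leqslant X\times Y\times Z$ is majority-selecting if for all $S$ and $x,x':S\to X$, $y,y':S\to Y$, $z,z':S\to Z$: $(x,y,z')\in_S R$, $(x,y',z)\in_S R$, $(x',y,z)\in_S R$ imply $(x,y,z)\in_S R$. A category with products is a majority category if all its ternary relations are majority-selecting. *)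

theory Defs
  imports Main
begin

text \<open>Categories given by carrier sets of objects and arrows (relativised),
  with domain, codomain, identities and composition (Comp C g f = g after f).\<close>

record ('o, 'a) cat =
  Ob  :: "'o set"
  Ar  :: "'a set"
  Dom :: "'a \<Rightarrow> 'o"
  Cod :: "'a \<Rightarrow> 'o"
  Id  :: "'o \<Rightarrow> 'a"
  Comp :: "'a \<Rightarrow> 'a \<Rightarrow> 'a"

definition hom :: "('o, 'a) cat \<Rightarrow> 'a \<Rightarrow> 'o \<Rightarrow> 'o \<Rightarrow> bool" where
  "hom C f X Y \<longleftrightarrow> f \<in> Ar C \<and> Dom C f = X \<and> Cod C f = Y"

definition category :: "('o, 'a) cat \<Rightarrow> bool" where
  "category C \<longleftrightarrow>
     (\<forall>f \<in> Ar C. Dom C f \<in> Ob C \<and> Cod C f \<in> Ob C)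
   \<and> (\<forall>X \<in> Ob C. hom C (Id C X) X X)
   \<and> (\<forall>f \<in> Ar C. \<forall>g \<in> Ar C. Cod C f = Dom C g \<longrightarrow> hom C (Comp C g f) (Dom C f) (Cod C g))
   \<and> (\<forall>f \<in> Ar C. \<forall>g \<in> Ar C. \<forall>h \<in> Ar C. Cod C f = Dom C g \<longrightarrow> Cod C g = Dom C h \<longrightarrow>
        Comp C h (Comp C g f) = Comp C (Comp C h g) f)
   \<and> (\<forall>f \<in> Ar C. Comp C (Id C (Cod C f)) f = f \<and> Comp C f (Id C (Dom C f)) = f)"

definition mono :: "('o, 'a) cat \<Rightarrow> 'a \<Rightarrow> bool" where
  "mono C m \<longleftrightarrow> m \<in> Ar C \<and>
     (\<forall>g \<in> Ar C. \<forall>h \<in> Ar C. Cod C g = Dom C m \<longrightarrow> Cod C h = Dom C m \<longrightarrow> Dom C g = Dom C h \<longrightarrow>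
        Comp C m g = Comp C m h \<longrightarrow> g = h)"

definition terminal :: "('o, 'a) cat \<Rightarrow> 'o \<Rightarrow> bool" where
  "terminal C T \<longleftrightarrow> T \<in> Ob C \<and> (\<forall>X \<in> Ob C. \<exists>!f. hom C f X T)"

definition is_product2 :: "('o, 'a) cat \<Rightarrow> 'a \<Rightarrow> 'a \<Rightarrow> bool" where
  "is_product2 C p1 p2 \<longleftrightarrow> p1 \<in> Ar C \<and> p2 \<in> Ar C \<and> Dom C p1 = Dom C p2 \<and>
     (\<forall>x \<in> Ar C. \<forall>y \<in> Ar C. Dom C x = Dom C y \<longrightarrow> Cod C x = Cod C p1 \<longrightarrow> Cod C y = Cod C p2 \<longrightarrow>
        (\<exists>!h. hom C h (Dom C x) (Dom C p1) \<and> Comp C p1 h = x \<and> Comp C p2 h = y))"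

definition is_product3 :: "('o, 'a) cat \<Rightarrow> 'a \<Rightarrow> 'a \<Rightarrow> 'a \<Rightarrow> bool" where
  "is_product3 C p1 p2 p3 \<longleftrightarrow> p1 \<in> Ar C \<and> p2 \<in> Ar C \<and> p3 \<in> Ar C \<and>
     Dom C p1 = Dom C p2 \<and> Dom C p1 = Dom C p3 \<and>
     (\<forall>x \<in> Ar C. \<forall>y \<in> Ar C. \<forall>z \<in> Ar C. Dom C x = Dom C y \<longrightarrow> Dom C x = Dom C z \<longrightarrow>
        Cod C x = Cod C p1 \<longrightarrow> Cod C y = Cod C p2 \<longrightarrow> Cod C z = Cod C p3 \<longrightarrow>
        (\<exists>!h. hom C h (Dom C x) (Dom C p1) \<and> Comp C p1 h = x \<and> Comp C p2 h = y \<and> Comp C p3 h = z))"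

definition is_equalizer :: "('o, 'a) cat \<Rightarrow> 'a \<Rightarrow> 'a \<Rightarrow> 'a \<Rightarrow> bool" where
  "is_equalizer C f g e \<longleftrightarrow> f \<in> Ar C \<and> g \<in> Ar C \<and> e \<in> Ar C \<and>
     Dom C f = Dom C g \<and> Cod C f = Cod C g \<and> Cod C e = Dom C f \<and> Comp C f e = Comp C g e \<and>
     (\<forall>u \<in> Ar C. Cod C u = Dom C f \<longrightarrow> Comp C f u = Comp C g u \<longrightarrow>
        (\<exists>!h. hom C h (Dom C u) (Dom C e) \<and> Comp C e h = u))"

definition is_pullback :: "('o, 'a) cat \<Rightarrow> 'a \<Rightarrow> 'a \<Rightarrow> 'a \<Rightarrow> 'a \<Rightarrow> bool" where
  "is_pullback C f g p q \<longleftrightarrow> f \<in> Ar C \<and> g \<in> Ar C \<and> p \<in> Ar C \<and> q \<in> Ar C \<and>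
     Cod C f = Cod C g \<and> Dom C p = Dom C q \<and> Cod C p = Dom C f \<and> Cod C q = Dom C g \<and>
     Comp C f p = Comp C g q \<and>
     (\<forall>u \<in> Ar C. \<forall>v \<in> Ar C. Dom C u = Dom C v \<longrightarrow> Cod C u = Dom C f \<longrightarrow> Cod C v = Dom C g \<longrightarrow>
        Comp C f u = Comp C g v \<longrightarrow>
        (\<exists>!h. hom C h (Dom C u) (Dom C p) \<and> Comp C p h = u \<and> Comp C q h = v))"

definition is_coequalizer :: "('o, 'a) cat \<Rightarrow> 'a \<Rightarrow> 'a \<Rightarrow> 'a \<Rightarrow> bool" where
  "is_coequalizer C f g e \<longleftrightarrow> f \<in> Ar C \<and> g \<in> Ar C \<and> e \<in> Ar C \<and>
     Dom C f = Dom C g \<and> Cod C f = Cod C g \<and> Dom C e = Cod C f \<and> Comp C e f = Comp C e g \<and>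
     (\<forall>u \<in> Ar C. Dom C u = Cod C f \<longrightarrow> Comp C u f = Comp C u g \<longrightarrow>
        (\<exists>!h. hom C h (Cod C e) (Cod C u) \<and> Comp C h e = u))"

definition regular_epi :: "('o, 'a) cat \<Rightarrow> 'a \<Rightarrow> bool" where
  "regular_epi C e \<longleftrightarrow> (\<exists>f g. is_coequalizer C f g e)"

definition has_finite_limits :: "('o, 'a) cat \<Rightarrow> bool" where
  "has_finite_limits C \<longleftrightarrow>
     (\<exists>T. terminal C T)
   \<and> (\<forall>X \<in> Ob C. \<forall>Y \<in> Ob C. \<exists>p1 p2. is_product2 C p1 p2 \<and> Cod C p1 = X \<and> Cod C p2 = Y)
   \<and> (\<forall>f \<in> Ar C. \<forall>g \<in> Ar C. Dom C f = Dom C g \<longrightarrow> Cod C f = Cod C g \<longrightarrow> (\<exists>e. is_equalizer C f g e))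
   \<and> (\<forall>f \<in> Ar C. \<forall>g \<in> Ar C. Cod C f = Cod C g \<longrightarrow> (\<exists>p q. is_pullback C f g p q))"

definition regular_category :: "('o, 'a) cat \<Rightarrow> bool" where
  "regular_category C \<longleftrightarrow> category C \<and> has_finite_limits C
   \<and> (\<forall>f p q. is_pullback C f f p q \<longrightarrow> (\<exists>e. is_coequalizer C p q e))
   \<and> (\<forall>f g p q. is_pullback C f g p q \<longrightarrow> regular_epi C f \<longrightarrow> regular_epi C q)"

text \<open>Binary relations on X: subobjects (monos) of a product X\<times>X given by a product
  cone (pi1, pi2).\<close>

definition eff_eqrel :: "('o, 'a) cat \<Rightarrow> 'a \<Rightarrow> 'a \<Rightarrow> 'a \<Rightarrow> bool" where
  "eff_eqrel C pi1 pi2 a \<longleftrightarrow> is_product2 C pi1 pi2 \<and> Cod C pi1 = Cod C pi2 \<and>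
     mono C a \<and> Cod C a = Dom C pi1 \<and>
     (\<exists>f \<in> Ar C. Dom C f = Cod C pi1 \<and> is_pullback C f f (Comp C pi1 a) (Comp C pi2 a))"

definition rel_inter :: "('o, 'a) cat \<Rightarrow> 'a \<Rightarrow> 'a \<Rightarrow> 'a \<Rightarrow> bool" where
  "rel_inter C a b m \<longleftrightarrow> (\<exists>u v. is_pullback C a b u v \<and> m = Comp C a u)"

text \<open>m represents the composite relation r \<circ> s (r \<subseteq> X\<times>X first, then s \<subseteq> X\<times>X):
  image of (r1 p1, s2 p2) where (p1,p2) is the pullback of s1 along r2.\<close>

definition rel_comp :: "('o, 'a) cat \<Rightarrow> 'a \<Rightarrow> 'a \<Rightarrow> 'a \<Rightarrow> 'a \<Rightarrow> 'a \<Rightarrow> bool" where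
  "rel_comp C pi1 pi2 r s m \<longleftrightarrow>
     (\<exists>p1 p2 t e. is_pullback C (Comp C pi2 r) (Comp C pi1 s) p1 p2 \<and>
        hom C t (Dom C p1) (Dom C pi1) \<and>
        Comp C pi1 t = Comp C (Comp C pi1 r) p1 \<and> Comp C pi2 t = Comp C (Comp C pi2 s) p2 \<and>
        regular_epi C e \<and> mono C m \<and> Cod C m = Dom C pi1 \<and> Dom C m = Cod C e \<and>
        t = Comp C m e)"

definition same_subobj :: "('o, 'a) cat \<Rightarrow> 'a \<Rightarrow> 'a \<Rightarrow> bool" where
  "same_subobj C m n \<longleftrightarrow> Cod C m = Cod C n \<and>
     (\<exists>h. hom C h (Dom C n) (Dom C m) \<and> Comp C m h = n) \<and>
     (\<exists>k. hom C k (Dom C m) (Dom C n) \<and> Comp C n k = m)"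

definition modular_distrib_hyp :: "('o, 'a) cat \<Rightarrow> bool" where
  "modular_distrib_hyp C \<longleftrightarrow>
     (\<forall>pi1 pi2 a b c. eff_eqrel C pi1 pi2 a \<and> eff_eqrel C pi1 pi2 b \<and> eff_eqrel C pi1 pi2 c \<longrightarrow>
       (\<forall>bc abc ab ac abac.
          rel_comp C pi1 pi2 b c bc \<and> rel_inter C a bc abc \<and>
          rel_inter C a b ab \<and> rel_inter C a c ac \<and> rel_comp C pi1 pi2 ab ac abac
          \<longrightarrow> same_subobj C abc abac))"

definition mem3 :: "('o, 'a) cat \<Rightarrow> 'a \<Rightarrow> 'a \<Rightarrow> 'a \<Rightarrow> 'a \<Rightarrow> 'a \<Rightarrow> 'a \<Rightarrow> 'a \<Rightarrow> bool" where
  "mem3 C p1 p2 p3 r x y z \<longleftrightarrow>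
     (\<exists>h. hom C h (Dom C x) (Dom C r) \<and>
        Comp C (Comp C p1 r) h = x \<and> Comp C (Comp C p2 r) h = y \<and> Comp C (Comp C p3 r) h = z)"

definition majority_selecting :: "('o, 'a) cat \<Rightarrow> 'a \<Rightarrow> 'a \<Rightarrow> 'a \<Rightarrow> 'a \<Rightarrow> bool" where
  "majority_selecting C p1 p2 p3 r \<longleftrightarrow>
     (\<forall>S x x' y y' z z'.
        hom C x S (Cod C p1) \<longrightarrow> hom C x' S (Cod C p1) \<longrightarrow>
        hom C y S (Cod C p2) \<longrightarrow> hom C y' S (Cod C p2) \<longrightarrow>
        hom C z S (Cod C p3) \<longrightarrow> hom C z' S (Cod C p3) \<longrightarrow>
        mem3 C p1 p2 p3 r x y z' \<longrightarrow> mem3 C p1 p2 p3 r x y' z \<longrightarrow> mem3 C p1 p2 p3 r x' y z \<longrightarrow>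
        mem3 C p1 p2 p3 r x y z)"

definition majority_category :: "('o, 'a) cat \<Rightarrow> bool" where
  "majority_category C \<longleftrightarrow>
     (\<forall>p1 p2 p3 r. is_product3 C p1 p2 p3 \<and> mono C r \<and> Cod C r = Dom C p1 \<longrightarrow>
        majority_selecting C p1 p2 p3 r)"

end

(*
  Let h1 = (x, y, z'), h2 = (x, y', z) and h3 = (x', y, z) be generalised elements of a relation
  r : R >-> X \<times> Y \<times> Z, and let \<alpha>, \<beta>, \<gamma> be the kernel pairs on R of the projections to Y, X
  and Z.  Then (h1, h3) \<in> \<alpha>, (h1, h2) \<in> \<beta> and (h2, h3) \<in> \<gamma>, so (h1, h3) lies in
  \<alpha> \<inter> (\<beta> \<circ> \<gamma>) = (\<alpha> \<inter> \<beta>) \<circ> (\<alpha> \<inter> \<gamma>).  Membership in a composite only yields a middle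
  element after precomposing with a regular epi q: there is d with (h1 q, d) \<in> \<alpha> \<inter> \<beta> and
  (d, h3 q) \<in> \<gamma>.  Thus d has the X- and Y-coordinates of h1 q and the Z-coordinate of h3 q,
  i.e. r d = (x, y, z) q, and since regular epis are orthogonal to monos, (x, y, z) factors
  through r.
*)

theory Submission
  imports Defs
begin

lemma ex1_unique: "\<exists>!x. P x \<Longrightarrow> P a \<Longrightarrow> P b \<Longrightarrow> a = b"
  by blast

locale category_ctx =
  fixes C :: "('o, 'a) cat"
  assumes category: "category C"
begin

abbreviation comp :: "'a \<Rightarrow> 'a \<Rightarrow> 'a" (infixr "\<cdot>" 55) where "g \<cdot> f \<equiv> Comp C g f"
abbreviation ar :: "'a \<Rightarrow> bool" where "ar f \<equiv> f \<in> Ar C"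
abbreviation dm :: "'a \<Rightarrow> 'o" where "dm f \<equiv> Dom C f"
abbreviation cd :: "'a \<Rightarrow> 'o" where "cd f \<equiv> Cod C f"

lemma comp_arr [simp]: "ar f \<Longrightarrow> ar g \<Longrightarrow> cd f = dm g \<Longrightarrow> ar (g \<cdot> f)"
  and dom_comp [simp]: "ar f \<Longrightarrow> ar g \<Longrightarrow> cd f = dm g \<Longrightarrow> dm (g \<cdot> f) = dm f"
  and cod_comp [simp]: "ar f \<Longrightarrow> ar g \<Longrightarrow> cd f = dm g \<Longrightarrow> cd (g \<cdot> f) = cd g"
  using category unfolding category_def hom_def by blast+

lemma comp_assoc [simp]:
  "ar f \<Longrightarrow> ar g \<Longrightarrow> ar h \<Longrightarrow> cd f = dm g \<Longrightarrow> cd g = dm h \<Longrightarrow> (h \<cdot> g) \<cdot> f = h \<cdot> g \<cdot> f"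
  using category unfolding category_def by metis

lemma dom_in_Ob: "ar f \<Longrightarrow> dm f \<in> Ob C"
  using category unfolding category_def by blast

lemma comp_extend:
  assumes "a \<cdot> b = c" "ar a" "ar b" "ar x" "cd b = dm a" "cd x = dm b"
  shows "a \<cdot> b \<cdot> x = c \<cdot> x"
proof -
  have "a \<cdot> b \<cdot> x = (a \<cdot> b) \<cdot> x" using assms(2-6) by simp
  then show ?thesis using assms(1) by simp
qed

lemma comp_eq_extend:
  assumes "a \<cdot> b = c \<cdot> d" "ar a" "ar b" "ar c" "ar d" "ar x"
    "cd b = dm a" "cd d = dm c" "cd x = dm b" "dm b = dm d"
  shows "a \<cdot> b \<cdot> x = c \<cdot> d \<cdot> x"
  by (metis assms comp_assoc)

lemma monoD:
  assumes "mono C m" "ar g" "ar h" "cd g = dm m" "cd h = dm m" "dm g = dm h" "m \<cdot> g = m \<cdot> h"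
  shows "g = h"
  using assms unfolding mono_def by blast

lemma monoI:
  assumes "ar m"
    and "\<And>g h. ar g \<Longrightarrow> ar h \<Longrightarrow> cd g = dm m \<Longrightarrow> cd h = dm m \<Longrightarrow> dm g = dm h \<Longrightarrow>
      m \<cdot> g = m \<cdot> h \<Longrightarrow> g = h"
  shows "mono C m"
  using assms unfolding mono_def by blast

lemma mono_arr: "mono C m \<Longrightarrow> ar m"
  unfolding mono_def by blast

lemma pullbackD:
  assumes "is_pullback C f g p q"
  shows "ar f" "ar g" "ar p" "ar q" "cd f = cd g" "dm q = dm p" "cd p = dm f" "cd q = dm g"
    "f \<cdot> p = g \<cdot> q"
  using assms unfolding is_pullback_def by auto

lemma pullback_universal:
  assumes "is_pullback C f g p q" "ar u" "ar v" "dm u = dm v" "cd u = dm f" "cd v = dm g"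
    "f \<cdot> u = g \<cdot> v"
  shows "\<exists>!h. hom C h (dm u) (dm p) \<and> p \<cdot> h = u \<and> q \<cdot> h = v"
  using assms unfolding is_pullback_def by blast

lemma pullback_lift:
  assumes "is_pullback C f g p q" "ar u" "ar v" "dm u = dm v" "cd u = dm f" "cd v = dm g"
    "f \<cdot> u = g \<cdot> v"
  obtains h where "ar h" "dm h = dm u" "cd h = dm p" "p \<cdot> h = u" "q \<cdot> h = v"
  using pullback_universal[OF assms] unfolding hom_def by blast

lemma pullback_arr_eq:
  assumes pb: "is_pullback C f g p q" and "ar h" "ar k" "dm k = dm h" "cd h = dm p" "cd k = dm p"
    "p \<cdot> h = p \<cdot> k" "q \<cdot> h = q \<cdot> k"
  shows "h = k"
proof -
  note P = pullbackD[OF pb]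
  have "f \<cdot> p \<cdot> h = g \<cdot> q \<cdot> h"
    by (rule comp_eq_extend[OF P(9)]) (use P(1-8) assms(2-6) in simp_all)
  then have unique: "\<exists>!l. hom C l (dm (p \<cdot> h)) (dm p) \<and> p \<cdot> l = p \<cdot> h \<and> q \<cdot> l = q \<cdot> h"
    by (intro pullback_universal[OF pb]) (use P(1-8) assms(2-6) in simp_all)
  have homs: "hom C h (dm (p \<cdot> h)) (dm p)" "hom C k (dm (p \<cdot> h)) (dm p)"
    using P(1-8) assms(2-6) by (simp_all add: hom_def)
  show ?thesis
    by (rule ex1_unique[OF unique]) (use homs assms(7,8) in simp_all)
qed

lemma product_universal:
  assumes "is_product2 C p1 p2" "ar x" "ar y" "dm x = dm y" "cd x = cd p1" "cd y = cd p2"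
  shows "\<exists>!h. hom C h (dm x) (dm p1) \<and> p1 \<cdot> h = x \<and> p2 \<cdot> h = y"
  using assms unfolding is_product2_def by blast

lemma productD:
  assumes "is_product2 C p1 p2"
  shows "ar p1" "ar p2" "dm p2 = dm p1"
  using assms unfolding is_product2_def by auto

lemma product_lift:
  assumes "is_product2 C p1 p2" "ar x" "ar y" "dm x = dm y" "cd x = cd p1" "cd y = cd p2"
  obtains h where "ar h" "dm h = dm x" "cd h = dm p1" "p1 \<cdot> h = x" "p2 \<cdot> h = y"
  using product_universal[OF assms] unfolding hom_def by blast

lemma product_arr_eq:
  assumes pr: "is_product2 C p1 p2" and "ar h" "ar k" "dm k = dm h" "cd h = dm p1" "cd k = dm p1"
    "p1 \<cdot> h = p1 \<cdot> k" "p2 \<cdot> h = p2 \<cdot> k"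
  shows "h = k"
proof -
  note P = productD[OF pr]
  have unique: "\<exists>!l. hom C l (dm (p1 \<cdot> h)) (dm p1) \<and> p1 \<cdot> l = p1 \<cdot> h \<and> p2 \<cdot> l = p2 \<cdot> h"
    by (intro product_universal[OF pr]) (use P assms(2-6) in simp_all)
  have homs: "hom C h (dm (p1 \<cdot> h)) (dm p1)" "hom C k (dm (p1 \<cdot> h)) (dm p1)"
    using P assms(2-6) by (simp_all add: hom_def)
  show ?thesis
    by (rule ex1_unique[OF unique]) (use homs assms(7,8) in simp_all)
qed

lemma product3_universal:
  assumes "is_product3 C p1 p2 p3" "ar x" "ar y" "ar z" "dm x = dm y" "dm x = dm z"
    "cd x = cd p1" "cd y = cd p2" "cd z = cd p3"
  shows "\<exists>!h. hom C h (dm x) (dm p1) \<and> p1 \<cdot> h = x \<and> p2 \<cdot> h = y \<and> p3 \<cdot> h = z"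
  using assms unfolding is_product3_def by blast

lemma product3D:
  assumes "is_product3 C p1 p2 p3"
  shows "ar p1" "ar p2" "ar p3" "dm p2 = dm p1" "dm p3 = dm p1"
  using assms unfolding is_product3_def by auto

lemma product3_lift:
  assumes "is_product3 C p1 p2 p3" "ar x" "ar y" "ar z" "dm x = dm y" "dm x = dm z"
    "cd x = cd p1" "cd y = cd p2" "cd z = cd p3"
  obtains h where "ar h" "dm h = dm x" "cd h = dm p1" "p1 \<cdot> h = x" "p2 \<cdot> h = y" "p3 \<cdot> h = z"
  using product3_universal[OF assms] unfolding hom_def by blast

lemma product3_arr_eq:
  assumes pr: "is_product3 C p1 p2 p3" and "ar h" "ar k" "dm k = dm h" "cd h = dm p1" "cd k = dm p1"
    "p1 \<cdot> h = p1 \<cdot> k" "p2 \<cdot> h = p2 \<cdot> k" "p3 \<cdot> h = p3 \<cdot> k"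
  shows "h = k"
proof -
  note P = product3D[OF pr]
  have unique: "\<exists>!l. hom C l (dm (p1 \<cdot> h)) (dm p1) \<and> p1 \<cdot> l = p1 \<cdot> h \<and> p2 \<cdot> l = p2 \<cdot> h \<and> p3 \<cdot> l = p3 \<cdot> h"
    by (intro product3_universal[OF pr]) (use P assms(2-6) in simp_all)
  have homs: "hom C h (dm (p1 \<cdot> h)) (dm p1)" "hom C k (dm (p1 \<cdot> h)) (dm p1)"
    using P assms(2-6) by (simp_all add: hom_def)
  show ?thesis
    by (rule ex1_unique[OF unique]) (use homs assms(7-9) in simp_all)
qed

lemma coequalizerD:
  assumes "is_coequalizer C f g e"
  shows "ar f" "ar g" "ar e" "dm g = dm f" "cd g = cd f" "dm e = cd f" "e \<cdot> f = e \<cdot> g"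
  using assms unfolding is_coequalizer_def by auto

lemma coequalizer_universal:
  assumes "is_coequalizer C f g e" "ar u" "dm u = cd f" "u \<cdot> f = u \<cdot> g"
  shows "\<exists>!h. hom C h (cd e) (cd u) \<and> h \<cdot> e = u"
  using assms unfolding is_coequalizer_def by blast

lemma coequalizer_desc:
  assumes "is_coequalizer C f g e" "ar u" "dm u = cd f" "u \<cdot> f = u \<cdot> g"
  obtains h where "ar h" "dm h = cd e" "cd h = cd u" "h \<cdot> e = u"
  using coequalizer_universal[OF assms] unfolding hom_def by blast

lemma regular_epi_arr: "regular_epi C e \<Longrightarrow> ar e"
  unfolding regular_epi_def is_coequalizer_def by blast

lemma regular_epi_cancel:
  assumes re: "regular_epi C e" and "ar u" "ar v" "dm u = cd e" "dm v = cd e" "cd v = cd u"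
    "u \<cdot> e = v \<cdot> e"
  shows "u = v"
proof -
  obtain f g where co: "is_coequalizer C f g e"
    using re unfolding regular_epi_def by blast
  note E = coequalizerD[OF co]
  have "(u \<cdot> e) \<cdot> f = (u \<cdot> e) \<cdot> g"
    using E assms by simp
  then have unique: "\<exists>!h. hom C h (cd e) (cd (u \<cdot> e)) \<and> h \<cdot> e = u \<cdot> e"
    by (intro coequalizer_universal[OF co]) (use E assms(2-6) in simp_all)
  have homs: "hom C u (cd e) (cd (u \<cdot> e))" "hom C v (cd e) (cd (u \<cdot> e))"
    using E assms(2-6) by (simp_all add: hom_def)
  show ?thesis
    by (rule ex1_unique[OF unique]) (use homs assms(7) in simp_all)
qed

lemma regular_epi_mono_diagonal:
  assumes re: "regular_epi C e" and mo: "mono C r" and "ar n" "ar d" "dm d = dm e" "cd d = dm r"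
    "dm n = cd e" "cd n = cd r" "r \<cdot> d = n \<cdot> e"
  obtains h where "ar h" "dm h = cd e" "cd h = dm r" "r \<cdot> h = n"
proof -
  obtain f g where co: "is_coequalizer C f g e"
    using re unfolding regular_epi_def by blast
  note E = coequalizerD[OF co]
  have r: "ar r" using mo by (rule mono_arr)
  have "r \<cdot> d \<cdot> f = r \<cdot> d \<cdot> g"
  proof -
    have "r \<cdot> d \<cdot> f = n \<cdot> e \<cdot> f" using comp_eq_extend[OF assms(9)] E assms r by simp
    also have "\<dots> = n \<cdot> e \<cdot> g" using E assms by simp
    also have "\<dots> = r \<cdot> d \<cdot> g" using comp_eq_extend[OF assms(9)] E assms r by simp
    finally show ?thesis .
  qed
  then have "d \<cdot> f = d \<cdot> g"
    by (rule monoD[OF mo, rotated -1]) (use E assms in simp_all)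
  moreover have "dm d = cd f"
    using E assms by simp
  ultimately obtain h where h: "ar h" "dm h = cd e" "cd h = cd d" "h \<cdot> e = d"
    using coequalizer_desc[OF co assms(4)] by blast
  have "(r \<cdot> h) \<cdot> e = n \<cdot> e"
    using h assms r E by simp
  then have "r \<cdot> h = n"
    by (rule regular_epi_cancel[OF re, rotated -1]) (use h assms r E in simp_all)
  then show ?thesis
    using that h assms(6) by simp
qed

lemma mem3_regular_epi_descend:
  assumes pr: "is_product3 C p1 p2 p3" and r: "mono C r" "cd r = dm p1"
    and q: "regular_epi C q"
    and xyz: "hom C x (cd q) (cd p1)" "hom C y (cd q) (cd p2)" "hom C z (cd q) (cd p3)"
    and "mem3 C p1 p2 p3 r (x \<cdot> q) (y \<cdot> q) (z \<cdot> q)"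
  shows "mem3 C p1 p2 p3 r x y z"
proof -
  note P = product3D[OF pr]
  have types: "ar q" "ar r" "ar x" "ar y" "ar z" "dm x = cd q" "dm y = cd q" "dm z = cd q"
    "cd x = cd p1" "cd y = cd p2" "cd z = cd p3"
    using q r xyz regular_epi_arr mono_arr unfolding hom_def by auto
  obtain d where d: "ar d" "dm d = dm q" "cd d = dm r" "(p1 \<cdot> r) \<cdot> d = x \<cdot> q"
      "(p2 \<cdot> r) \<cdot> d = y \<cdot> q" "(p3 \<cdot> r) \<cdot> d = z \<cdot> q"
    using assms(8) types unfolding mem3_def hom_def by auto
  obtain n where n: "ar n" "dm n = cd q" "cd n = dm p1" "p1 \<cdot> n = x" "p2 \<cdot> n = y" "p3 \<cdot> n = z"
    by (rule product3_lift[OF pr types(3-5)]) (use types in simp_all)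
  have nq: "p1 \<cdot> n \<cdot> q = x \<cdot> q" "p2 \<cdot> n \<cdot> q = y \<cdot> q" "p3 \<cdot> n \<cdot> q = z \<cdot> q"
    by (rule comp_extend[OF n(4)] comp_extend[OF n(5)] comp_extend[OF n(6)];
        use types n(1-3) P in simp)+
  have "r \<cdot> d = n \<cdot> q"
  proof (rule product3_arr_eq[OF pr])
    show "p1 \<cdot> r \<cdot> d = p1 \<cdot> n \<cdot> q" "p2 \<cdot> r \<cdot> d = p2 \<cdot> n \<cdot> q" "p3 \<cdot> r \<cdot> d = p3 \<cdot> n \<cdot> q"
      using d types P r(2) nq by simp_all
  qed (use d types n(1-3) P r(2) in simp_all)
  then obtain h where h: "ar h" "dm h = cd q" "cd h = dm r" "r \<cdot> h = n"
    by (rule regular_epi_mono_diagonal[OF q r(1) n(1) d(1), rotated 4])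
      (use d types n r(2) in simp_all)
  show ?thesis
    unfolding mem3_def hom_def using h n types P r(2) by auto
qed

end

locale regular_category_ctx = category_ctx +
  assumes regular: "regular_category C"
begin

lemma pullback_exists:
  assumes "ar f" "ar g" "cd f = cd g"
  obtains p q where "is_pullback C f g p q"
  using regular assms unfolding regular_category_def has_finite_limits_def by blast

lemma product_exists:
  assumes "X \<in> Ob C" "Y \<in> Ob C"
  obtains p1 p2 where "is_product2 C p1 p2" "cd p1 = X" "cd p2 = Y"
  using regular assms unfolding regular_category_def has_finite_limits_def by blast

lemma kernel_pair_coequalizer_exists:
  assumes "is_pullback C f f p q"
  obtains e where "is_coequalizer C p q e"
  using regular assms unfolding regular_category_def by blast

lemma regular_epi_pullback:
  assumes "is_pullback C f g p q" "regular_epi C f"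
  shows "regular_epi C q"
  using regular assms unfolding regular_category_def by blast

lemma regular_epi_cover:
  assumes re: "regular_epi C e" and "ar g" "cd g = cd e"
  obtains q l where "regular_epi C q" "ar q" "cd q = dm g" "ar l" "dm l = dm q" "cd l = dm e"
    "e \<cdot> l = g \<cdot> q"
proof -
  obtain l q where pb: "is_pullback C e g l q"
    using pullback_exists[OF regular_epi_arr[OF re] assms(2)] assms(3) by metis
  note P = pullbackD[OF pb]
  show ?thesis
    by (rule that[OF regular_epi_pullback[OF pb re]]) (use P in simp_all)
qed

lemma kernel_pair_coequalizer_factor_mono:
  assumes pb: "is_pullback C (m \<cdot> e) (m \<cdot> e) p q" and co: "is_coequalizer C p q e"
    and m: "ar m" "dm m = cd e"
  shows "mono C m"
proof (rule monoI[OF m(1)])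
  note P = pullbackD[OF pb] and E = coequalizerD[OF co]
  have re: "regular_epi C e"
    using co unfolding regular_epi_def by blast
  fix g h
  assume g: "ar g" "cd g = dm m" and h: "ar h" "cd h = dm m" and "dm g = dm h"
    and mgh: "m \<cdot> g = m \<cdot> h"
  obtain q1 l1 where q1: "regular_epi C q1" "ar q1" "cd q1 = dm g" "ar l1" "dm l1 = dm q1"
      "cd l1 = dm e" "e \<cdot> l1 = g \<cdot> q1"
    by (rule regular_epi_cover[OF re g(1)]) (use g m in simp)
  obtain q2 l2 where q2: "regular_epi C q2" "ar q2" "cd q2 = dm q1" "ar l2" "dm l2 = dm q2"
      "cd l2 = dm e" "e \<cdot> l2 = (h \<cdot> q1) \<cdot> q2"
    by (rule regular_epi_cover[OF re, of "h \<cdot> q1"]) (use h m q1 \<open>dm g = dm h\<close> in simp_all)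
  note types = E(1-6) P(3,4,6) g h m q1(2-6) q2(2-6) \<open>dm g = dm h\<close>
  have same_image: "(m \<cdot> e) \<cdot> l1 \<cdot> q2 = (m \<cdot> e) \<cdot> l2"
  proof -
    have "(m \<cdot> e) \<cdot> l1 \<cdot> q2 = m \<cdot> g \<cdot> q1 \<cdot> q2"
      using types comp_eq_extend[OF q1(7)] by simp
    also have "\<dots> = m \<cdot> h \<cdot> q1 \<cdot> q2"
      using types comp_eq_extend[OF mgh] by simp
    also have "\<dots> = (m \<cdot> e) \<cdot> l2"
      using types q2(7) by simp
    finally show ?thesis .
  qed
  obtain k where k: "ar k" "dm k = dm (l1 \<cdot> q2)" "cd k = dm p" "p \<cdot> k = l1 \<cdot> q2" "q \<cdot> k = l2"
    by (rule pullback_lift[OF pb _ _ _ _ _ same_image]) (use types in simp_all)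
  have "(g \<cdot> q1) \<cdot> q2 = (h \<cdot> q1) \<cdot> q2"
  proof -
    have "(g \<cdot> q1) \<cdot> q2 = e \<cdot> p \<cdot> k"
      using types k(1-4) comp_eq_extend[OF q1(7)] by simp
    also have "\<dots> = e \<cdot> q \<cdot> k"
      by (rule comp_eq_extend[OF E(7)]) (use types k(1-3) in simp_all)
    also have "\<dots> = (h \<cdot> q1) \<cdot> q2"
      using k(5) q2(7) by simp
    finally show ?thesis .
  qed
  then have "g \<cdot> q1 = h \<cdot> q1"
    by (rule regular_epi_cancel[OF q2(1), rotated -1]) (use types in simp_all)
  then show "g = h"
    by (rule regular_epi_cancel[OF q1(1), rotated -1]) (use types in simp_all)
qed

lemma image_factorization:
  assumes "ar f"
  obtains e m where "regular_epi C e" "mono C m" "dm e = dm f" "cd e = dm m" "cd m = cd f"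
    "m \<cdot> e = f"
proof -
  obtain p q where pb: "is_pullback C f f p q"
    using pullback_exists assms by blast
  obtain e where co: "is_coequalizer C p q e"
    using kernel_pair_coequalizer_exists[OF pb] by blast
  note P = pullbackD[OF pb] and E = coequalizerD[OF co]
  obtain m where m: "ar m" "dm m = cd e" "cd m = cd f" "m \<cdot> e = f"
    by (rule coequalizer_desc[OF co assms]) (use P in simp_all)
  have "regular_epi C e"
    using co unfolding regular_epi_def by blast
  moreover have "mono C m"
    using kernel_pair_coequalizer_factor_mono[OF _ co m(1,2)] pb m(4) by simp
  ultimately show ?thesis
    using that m(2-4) E(6) P(7) by simp
qed

lemma kernel_relation_exists:
  assumes pr: "is_product2 C pi1 pi2" and "cd pi1 = cd pi2" "ar f" "dm f = cd pi1"
  obtains a where "eff_eqrel C pi1 pi2 a" "is_pullback C f f (pi1 \<cdot> a) (pi2 \<cdot> a)"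
proof -
  note Pr = productD[OF pr]
  obtain u v where pb: "is_pullback C f f u v"
    using pullback_exists assms(3) by blast
  note P = pullbackD[OF pb]
  obtain a where a: "ar a" "dm a = dm u" "cd a = dm pi1" "pi1 \<cdot> a = u" "pi2 \<cdot> a = v"
    by (rule product_lift[OF pr P(3,4)]) (use P assms in simp_all)
  have "mono C a"
  proof (rule monoI[OF a(1)])
    fix g h
    assume "ar g" "ar h" "cd g = dm a" "cd h = dm a" "dm g = dm h" "a \<cdot> g = a \<cdot> h"
    then have "u \<cdot> g = u \<cdot> h" "v \<cdot> g = v \<cdot> h"
      using a Pr by (metis comp_assoc)+
    then show "g = h"
      by (rule pullback_arr_eq[OF pb, rotated -2]) (use \<open>ar g\<close> \<open>ar h\<close> \<open>cd g = dm a\<close>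
        \<open>cd h = dm a\<close> \<open>dm g = dm h\<close> a in simp_all)
  qed
  moreover have "is_pullback C f f (pi1 \<cdot> a) (pi2 \<cdot> a)"
    using pb a(4,5) by simp
  ultimately show ?thesis
    using that pr assms(2-4) a(3) unfolding eff_eqrel_def by blast
qed

end

locale product_relations = regular_category_ctx C for C :: "('o, 'a) cat" +
  fixes pi1 pi2 :: 'a
  assumes product: "is_product2 C pi1 pi2"
    and square: "cd pi1 = cd pi2"
begin

abbreviation rel :: "'a \<Rightarrow> bool" where
  "rel m \<equiv> ar m \<and> cd m = dm pi1"

definition in_rel :: "'a \<Rightarrow> 'a \<Rightarrow> 'a \<Rightarrow> bool" where
  "in_rel m s t \<longleftrightarrow> (\<exists>h. ar h \<and> cd h = dm m \<and> pi1 \<cdot> m \<cdot> h = s \<and> pi2 \<cdot> m \<cdot> h = t)"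

lemma pi_arrs: "ar pi1" "ar pi2" "dm pi2 = dm pi1"
  using productD[OF product] by auto

lemma in_relI: "ar h \<Longrightarrow> cd h = dm m \<Longrightarrow> in_rel m (pi1 \<cdot> m \<cdot> h) (pi2 \<cdot> m \<cdot> h)"
  unfolding in_rel_def by blast

lemma in_relE:
  assumes "in_rel m s t"
  obtains h where "ar h" "cd h = dm m" "s = pi1 \<cdot> m \<cdot> h" "t = pi2 \<cdot> m \<cdot> h"
  using assms unfolding in_rel_def by blast

lemma in_rel_arrs:
  assumes "rel m" "in_rel m s t"
  shows "ar s" "ar t" "dm t = dm s" "cd s = cd pi1" "cd t = cd pi1"
  using assms(2) by (elim in_relE; use assms(1) pi_arrs square in simp)+

lemma in_kernel_iff:
  assumes pb: "is_pullback C f f (pi1 \<cdot> a) (pi2 \<cdot> a)" and a: "rel a"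
    and st: "ar s" "ar t" "dm t = dm s" "cd s = cd pi1" "cd t = cd pi1"
  shows "in_rel a s t \<longleftrightarrow> f \<cdot> s = f \<cdot> t"
proof -
  note P = pullbackD[OF pb]
  show ?thesis
  proof
    assume "in_rel a s t"
    then obtain h where h: "ar h" "cd h = dm a" "s = pi1 \<cdot> a \<cdot> h" "t = pi2 \<cdot> a \<cdot> h"
      by (rule in_relE)
    have "f \<cdot> (pi1 \<cdot> a) \<cdot> h = f \<cdot> (pi2 \<cdot> a) \<cdot> h"
      by (rule comp_eq_extend[OF P(9)]) (use P(1-8) h(1,2) a pi_arrs in simp_all)
    then show "f \<cdot> s = f \<cdot> t"
      using h a pi_arrs by simp
  next
    have dom_f: "dm f = cd pi1"
      using P(7) a pi_arrs by simp
    assume eq: "f \<cdot> s = f \<cdot> t"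
    obtain h where h: "ar h" "dm h = dm s" "cd h = dm (pi1 \<cdot> a)" "(pi1 \<cdot> a) \<cdot> h = s"
        "(pi2 \<cdot> a) \<cdot> h = t"
      by (rule pullback_lift[OF pb st(1,2) _ _ _ eq]) (use st dom_f in simp_all)
    then show "in_rel a s t"
      using in_relI[of h a] a pi_arrs by simp
  qed
qed

lemma in_inter_iff:
  assumes inter: "rel_inter C a b m" and a: "rel a" and b: "rel b"
  shows "in_rel m s t \<longleftrightarrow> in_rel a s t \<and> in_rel b s t"
proof -
  obtain u v where pb: "is_pullback C a b u v" and m: "m = a \<cdot> u"
    using inter unfolding rel_inter_def by blast
  note P = pullbackD[OF pb]
  show ?thesis
  proof (intro iffI conjI)
    assume "in_rel m s t"
    then obtain h where h: "ar h" "cd h = dm m" "s = pi1 \<cdot> m \<cdot> h" "t = pi2 \<cdot> m \<cdot> h"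
      by (rule in_relE)
    have h_cod: "cd h = dm u"
      using h(2) m P a by simp
    have "in_rel a (pi1 \<cdot> a \<cdot> u \<cdot> h) (pi2 \<cdot> a \<cdot> u \<cdot> h)"
      by (rule in_relI) (use h(1) h_cod P in simp_all)
    then show "in_rel a s t"
      using h(1,3,4) h_cod m P(1-8) a pi_arrs by simp
    have "in_rel b (pi1 \<cdot> b \<cdot> v \<cdot> h) (pi2 \<cdot> b \<cdot> v \<cdot> h)"
      by (rule in_relI) (use h(1) h_cod P in simp_all)
    moreover have "a \<cdot> u \<cdot> h = b \<cdot> v \<cdot> h"
      by (rule comp_eq_extend[OF P(9)]) (use h(1) h_cod P(1-8) in simp_all)
    ultimately show "in_rel b s t"
      using h(1,3,4) h_cod m P(1-8) a pi_arrs by simp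
  next
    assume "in_rel a s t \<and> in_rel b s t"
    then obtain ha hb
      where ha: "ar ha" "cd ha = dm a" "s = pi1 \<cdot> a \<cdot> ha" "t = pi2 \<cdot> a \<cdot> ha"
        and hb: "ar hb" "cd hb = dm b" "s = pi1 \<cdot> b \<cdot> hb" "t = pi2 \<cdot> b \<cdot> hb"
      by (meson in_relE)
    have dom_ha: "dm s = dm ha"
      using ha(1-3) a pi_arrs by simp
    have dom_hb: "dm s = dm hb"
      using hb(1-3) b pi_arrs by simp
    have "a \<cdot> ha = b \<cdot> hb"
    proof (rule product_arr_eq[OF product])
      show "pi1 \<cdot> a \<cdot> ha = pi1 \<cdot> b \<cdot> hb" "pi2 \<cdot> a \<cdot> ha = pi2 \<cdot> b \<cdot> hb"
        using ha(3,4) hb(3,4) by simp_all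
    qed (use ha(1,2) hb(1,2) dom_ha dom_hb a b in simp_all)
    then obtain k where k: "ar k" "dm k = dm ha" "cd k = dm u" "u \<cdot> k = ha" "v \<cdot> k = hb"
      by (rule pullback_lift[OF pb ha(1) hb(1), rotated 3]) (use ha(2) hb(2) dom_ha dom_hb in simp_all)
    have "in_rel m (pi1 \<cdot> m \<cdot> k) (pi2 \<cdot> m \<cdot> k)"
      by (rule in_relI) (use k(1,3) m P a in simp_all)
    then show "in_rel m s t"
      using k m P(1-8) a pi_arrs ha(3,4) by simp
  qed
qed

lemma in_rel_compI:
  assumes comp: "rel_comp C pi1 pi2 b c m" and b: "rel b" and c: "rel c"
    and "in_rel b s t" "in_rel c t u"
  shows "in_rel m s u"
proof -
  obtain p1 p2 r e where pb: "is_pullback C (pi2 \<cdot> b) (pi1 \<cdot> c) p1 p2"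
    and r: "ar r" "dm r = dm p1" "cd r = dm pi1" "pi1 \<cdot> r = (pi1 \<cdot> b) \<cdot> p1"
      "pi2 \<cdot> r = (pi2 \<cdot> c) \<cdot> p2"
    and e: "regular_epi C e" "mono C m" "cd m = dm pi1" "dm m = cd e" "r = m \<cdot> e"
    using comp unfolding rel_comp_def hom_def by blast
  note P = pullbackD[OF pb]
  have types: "ar e" "ar m" "ar p1" "ar p2" "dm p2 = dm p1" "dm e = dm p1" "cd p1 = dm b"
      "cd p2 = dm c"
    using r(1,2) e P b c pi_arrs mono_arr regular_epi_arr by auto
  obtain g1 where g1: "ar g1" "cd g1 = dm b" "s = pi1 \<cdot> b \<cdot> g1" "t = pi2 \<cdot> b \<cdot> g1"
    using assms(4) by (rule in_relE)
  obtain g2 where g2: "ar g2" "cd g2 = dm c" "t = pi1 \<cdot> c \<cdot> g2" "u = pi2 \<cdot> c \<cdot> g2"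
    using assms(5) by (rule in_relE)
  have dom_g1: "dm t = dm g1"
    using g1(1,2,4) b pi_arrs by simp
  have dom_g2: "dm t = dm g2"
    using g2(1-3) c pi_arrs by simp
  have "(pi2 \<cdot> b) \<cdot> g1 = (pi1 \<cdot> c) \<cdot> g2"
    using g1 g2 b c pi_arrs by simp
  then obtain k where k: "ar k" "dm k = dm g1" "cd k = dm p1" "p1 \<cdot> k = g1" "p2 \<cdot> k = g2"
    by (rule pullback_lift[OF pb g1(1) g2(1), rotated 3])
      (use g1(1,2) g2(1,2) dom_g1 dom_g2 b c pi_arrs in simp_all)
  have "in_rel m (pi1 \<cdot> m \<cdot> e \<cdot> k) (pi2 \<cdot> m \<cdot> e \<cdot> k)"
    by (rule in_relI) (use types k e(4) in simp_all)
  moreover have "(pi1 \<cdot> r) \<cdot> k = ((pi1 \<cdot> b) \<cdot> p1) \<cdot> k" "(pi2 \<cdot> r) \<cdot> k = ((pi2 \<cdot> c) \<cdot> p2) \<cdot> k"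
    using r(4,5) by simp_all
  ultimately show ?thesis
    using types k(1,3-5) g1 g2 e(3-5) b c pi_arrs by simp
qed

lemma in_rel_compE:
  assumes comp: "rel_comp C pi1 pi2 b c m" and b: "rel b" and c: "rel c"
    and "in_rel m s u"
  obtains q t where "regular_epi C q" "ar q" "cd q = dm s" "in_rel b (s \<cdot> q) t"
    "in_rel c t (u \<cdot> q)"
proof -
  obtain p1 p2 r e where pb: "is_pullback C (pi2 \<cdot> b) (pi1 \<cdot> c) p1 p2"
    and r: "ar r" "dm r = dm p1" "cd r = dm pi1" "pi1 \<cdot> r = (pi1 \<cdot> b) \<cdot> p1"
      "pi2 \<cdot> r = (pi2 \<cdot> c) \<cdot> p2"
    and e: "regular_epi C e" "mono C m" "cd m = dm pi1" "dm m = cd e" "r = m \<cdot> e"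
    using comp unfolding rel_comp_def hom_def by blast
  note P = pullbackD[OF pb]
  have types: "ar e" "ar m" "ar p1" "ar p2" "dm p2 = dm p1" "dm e = dm p1" "cd p1 = dm b"
      "cd p2 = dm c"
    using r(1,2) e P b c pi_arrs mono_arr regular_epi_arr by auto
  obtain h where h: "ar h" "cd h = dm m" "s = pi1 \<cdot> m \<cdot> h" "u = pi2 \<cdot> m \<cdot> h"
    using assms(4) by (rule in_relE)
  obtain q l where q: "regular_epi C q" "ar q" "cd q = dm h" "ar l" "dm l = dm q" "cd l = dm e"
      "e \<cdot> l = h \<cdot> q"
    by (rule regular_epi_cover[OF e(1) h(1)]) (use h(2) e(4) in simp)
  have "in_rel b (pi1 \<cdot> b \<cdot> p1 \<cdot> l) (pi2 \<cdot> b \<cdot> p1 \<cdot> l)"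
    by (rule in_relI) (use types q P in simp_all)
  moreover have "in_rel c (pi1 \<cdot> c \<cdot> p2 \<cdot> l) (pi2 \<cdot> c \<cdot> p2 \<cdot> l)"
    by (rule in_relI) (use types q P in simp_all)
  moreover have "pi1 \<cdot> m \<cdot> h \<cdot> q = pi1 \<cdot> b \<cdot> p1 \<cdot> l" "pi2 \<cdot> m \<cdot> h \<cdot> q = pi2 \<cdot> c \<cdot> p2 \<cdot> l"
    "pi1 \<cdot> c \<cdot> p2 \<cdot> l = pi2 \<cdot> b \<cdot> p1 \<cdot> l"
  proof -
    have "m \<cdot> h \<cdot> q = m \<cdot> e \<cdot> l"
      using q(7) types q h e(4) by simp
    moreover have "(pi1 \<cdot> r) \<cdot> l = ((pi1 \<cdot> b) \<cdot> p1) \<cdot> l" "(pi2 \<cdot> r) \<cdot> l = ((pi2 \<cdot> c) \<cdot> p2) \<cdot> l"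
      using r(4,5) by simp_all
    moreover have "(pi2 \<cdot> b) \<cdot> p1 \<cdot> l = (pi1 \<cdot> c) \<cdot> p2 \<cdot> l"
      by (rule comp_eq_extend[OF P(9)]) (use P(1-8) types q in simp_all)
    ultimately show "pi1 \<cdot> m \<cdot> h \<cdot> q = pi1 \<cdot> b \<cdot> p1 \<cdot> l" "pi2 \<cdot> m \<cdot> h \<cdot> q = pi2 \<cdot> c \<cdot> p2 \<cdot> l"
      "pi1 \<cdot> c \<cdot> p2 \<cdot> l = pi2 \<cdot> b \<cdot> p1 \<cdot> l"
      using types q(2-6) h(1,2) e(3-5) P(1-8) b c pi_arrs by simp_all
  qed
  ultimately show ?thesis
    using that[OF q(1,2), of "pi2 \<cdot> b \<cdot> p1 \<cdot> l"] types q(2,3) h e(3) b c pi_arrs by simp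
qed

lemma in_rel_same_subobj:
  assumes "same_subobj C m n" "rel n" "in_rel m s t"
  shows "in_rel n s t"
proof -
  obtain k where k: "ar k" "dm k = dm m" "cd k = dm n" "n \<cdot> k = m"
    using assms(1) unfolding same_subobj_def hom_def by blast
  obtain h where h: "ar h" "cd h = dm m" "s = pi1 \<cdot> m \<cdot> h" "t = pi2 \<cdot> m \<cdot> h"
    using assms(3) by (rule in_relE)
  have "in_rel n (pi1 \<cdot> n \<cdot> k \<cdot> h) (pi2 \<cdot> n \<cdot> k \<cdot> h)"
    by (rule in_relI) (use k h in simp_all)
  moreover have "(n \<cdot> k) \<cdot> h = m \<cdot> h"
    using k(4) by simp
  ultimately show ?thesis
    using k(1-3) h assms(2) pi_arrs by simp
qed

lemma eff_eqrel_rel: "eff_eqrel C pi1 pi2 a \<Longrightarrow> rel a"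
  unfolding eff_eqrel_def using mono_arr by blast

lemma rel_comp_rel: "rel_comp C pi1 pi2 b c m \<Longrightarrow> rel m"
  unfolding rel_comp_def using mono_arr by blast

lemma rel_inter_rel: "rel_inter C a b m \<Longrightarrow> rel a \<Longrightarrow> rel m"
  unfolding rel_inter_def using pullbackD by fastforce

lemma rel_inter_exists:
  assumes "rel a" "rel b"
  obtains m where "rel_inter C a b m"
  using pullback_exists[of a b] assms unfolding rel_inter_def by metis

lemma rel_comp_exists:
  assumes b: "rel b" and c: "rel c"
  obtains m where "rel_comp C pi1 pi2 b c m"
proof -
  obtain p1 p2 where pb: "is_pullback C (pi2 \<cdot> b) (pi1 \<cdot> c) p1 p2"
    using pullback_exists[of "pi2 \<cdot> b" "pi1 \<cdot> c"] b c pi_arrs square by auto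
  note P = pullbackD[OF pb]
  have "ar ((pi1 \<cdot> b) \<cdot> p1)" "ar ((pi2 \<cdot> c) \<cdot> p2)" "dm ((pi1 \<cdot> b) \<cdot> p1) = dm ((pi2 \<cdot> c) \<cdot> p2)"
    "cd ((pi1 \<cdot> b) \<cdot> p1) = cd pi1" "cd ((pi2 \<cdot> c) \<cdot> p2) = cd pi2"
    using P(1-8) b c pi_arrs by simp_all
  then obtain r where r: "ar r" "dm r = dm ((pi1 \<cdot> b) \<cdot> p1)" "cd r = dm pi1"
      "pi1 \<cdot> r = (pi1 \<cdot> b) \<cdot> p1" "pi2 \<cdot> r = (pi2 \<cdot> c) \<cdot> p2"
    by (rule product_lift[OF product])
  obtain e m where "regular_epi C e" "mono C m" "dm e = dm r" "cd e = dm m" "cd m = cd r"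
      "m \<cdot> e = r"
    using image_factorization[OF r(1)] by blast
  then have "rel_comp C pi1 pi2 b c m"
    unfolding rel_comp_def hom_def
    by (intro exI[of _ p1] exI[of _ p2] exI[of _ r] exI[of _ e] conjI)
      (use pb r P(1-8) b c pi_arrs in simp_all)
  then show ?thesis
    by (rule that)
qed

lemma distributive_in_rel:
  assumes hyp: "modular_distrib_hyp C"
    and eqrels: "eff_eqrel C pi1 pi2 a" "eff_eqrel C pi1 pi2 b" "eff_eqrel C pi1 pi2 c"
    and "in_rel a s u" "in_rel b s t" "in_rel c t u"
  obtains q d where "regular_epi C q" "ar q" "cd q = dm s" "in_rel a (s \<cdot> q) d"
    "in_rel b (s \<cdot> q) d" "in_rel c d (u \<cdot> q)"
proof -
  have a: "rel a" and b: "rel b" and c: "rel c"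
    using eqrels by (simp_all add: eff_eqrel_rel)
  obtain bc where bc: "rel_comp C pi1 pi2 b c bc"
    using rel_comp_exists[OF b c] by blast
  obtain abc where abc: "rel_inter C a bc abc"
    using rel_inter_exists[OF a rel_comp_rel[OF bc]] by blast
  obtain ab ac where ab: "rel_inter C a b ab" and ac: "rel_inter C a c ac"
    using rel_inter_exists[OF a b] rel_inter_exists[OF a c] by metis
  obtain abac where abac: "rel_comp C pi1 pi2 ab ac abac"
    using rel_comp_exists[OF rel_inter_rel[OF ab a] rel_inter_rel[OF ac a]] by blast
  have "same_subobj C abc abac"
    using hyp eqrels bc abc ab ac abac unfolding modular_distrib_hyp_def by blast
  moreover have "in_rel abc s u"
    using in_inter_iff[OF abc a rel_comp_rel[OF bc]] in_rel_compI[OF bc b c] assms(5-7) by blast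
  ultimately have "in_rel abac s u"
    using in_rel_same_subobj rel_comp_rel[OF abac] by blast
  then obtain q d where "regular_epi C q" "ar q" "cd q = dm s" "in_rel ab (s \<cdot> q) d"
      "in_rel ac d (u \<cdot> q)"
    by (rule in_rel_compE[OF abac rel_inter_rel[OF ab a] rel_inter_rel[OF ac a]])
  then show ?thesis
    using that in_inter_iff[OF ab a b] in_inter_iff[OF ac a c] by blast
qed

lemma kernel_majority:
  assumes hyp: "modular_distrib_hyp C"
    and f: "ar f1" "ar f2" "ar f3" "dm f1 = cd pi1" "dm f2 = cd pi1" "dm f3 = cd pi1"
    and h: "ar h1" "ar h2" "ar h3" "cd h1 = cd pi1" "cd h2 = cd pi1" "cd h3 = cd pi1"
      "dm h2 = dm h1" "dm h3 = dm h1"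
    and agree: "f1 \<cdot> h1 = f1 \<cdot> h2" "f2 \<cdot> h1 = f2 \<cdot> h3" "f3 \<cdot> h2 = f3 \<cdot> h3"
  obtains q d where "regular_epi C q" "ar q" "cd q = dm h1" "ar d" "dm d = dm q" "cd d = cd pi1"
    "f1 \<cdot> d = f1 \<cdot> h1 \<cdot> q" "f2 \<cdot> d = f2 \<cdot> h1 \<cdot> q" "f3 \<cdot> d = f3 \<cdot> h3 \<cdot> q"
proof -
  obtain a where a: "eff_eqrel C pi1 pi2 a" "is_pullback C f2 f2 (pi1 \<cdot> a) (pi2 \<cdot> a)"
    using kernel_relation_exists[OF product square f(2,5)] by blast
  obtain b where b: "eff_eqrel C pi1 pi2 b" "is_pullback C f1 f1 (pi1 \<cdot> b) (pi2 \<cdot> b)"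
    using kernel_relation_exists[OF product square f(1,4)] by blast
  obtain c where c: "eff_eqrel C pi1 pi2 c" "is_pullback C f3 f3 (pi1 \<cdot> c) (pi2 \<cdot> c)"
    using kernel_relation_exists[OF product square f(3,6)] by blast
  note in_a = in_kernel_iff[OF a(2) eff_eqrel_rel[OF a(1)]]
    and in_b = in_kernel_iff[OF b(2) eff_eqrel_rel[OF b(1)]]
    and in_c = in_kernel_iff[OF c(2) eff_eqrel_rel[OF c(1)]]
  have "in_rel a h1 h3" "in_rel b h1 h2" "in_rel c h2 h3"
    using in_a[of h1 h3] in_b[of h1 h2] in_c[of h2 h3] h agree by simp_all
  then obtain q d where q: "regular_epi C q" "ar q" "cd q = dm h1"
    and d: "in_rel a (h1 \<cdot> q) d" "in_rel b (h1 \<cdot> q) d" "in_rel c d (h3 \<cdot> q)"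
    by (rule distributive_in_rel[OF hyp a(1) b(1) c(1)])
  have d_arr: "ar d" "dm d = dm q" "cd d = cd pi1"
    using in_rel_arrs[OF eff_eqrel_rel[OF a(1)] d(1)] q h by simp_all
  have "f2 \<cdot> h1 \<cdot> q = f2 \<cdot> d" "f1 \<cdot> h1 \<cdot> q = f1 \<cdot> d" "f3 \<cdot> d = f3 \<cdot> h3 \<cdot> q"
    using in_a[of "h1 \<cdot> q" d] in_b[of "h1 \<cdot> q" d] in_c[of d "h3 \<cdot> q"] d d_arr q h by simp_all
  then show ?thesis
    using that[OF q d_arr] by simp
qed

end

lemma (in regular_category_ctx) majority_selecting:
  assumes hyp: "modular_distrib_hyp C"
    and pr: "is_product3 C p1 p2 p3" and r: "mono C r" "cd r = dm p1"
  shows "majority_selecting C p1 p2 p3 r"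
  unfolding majority_selecting_def
proof (intro allI impI)
  fix S x x' y y' z z'
  assume "hom C x S (cd p1)" "hom C x' S (cd p1)" "hom C y S (cd p2)" "hom C y' S (cd p2)"
    "hom C z S (cd p3)" "hom C z' S (cd p3)"
    and "mem3 C p1 p2 p3 r x y z'" "mem3 C p1 p2 p3 r x y' z" "mem3 C p1 p2 p3 r x' y z"
  then obtain h1 h2 h3 where h: "ar h1" "ar h2" "ar h3" "dm h1 = S" "dm h2 = S" "dm h3 = S"
      "cd h1 = dm r" "cd h2 = dm r" "cd h3 = dm r"
    and h1: "(p1 \<cdot> r) \<cdot> h1 = x" "(p2 \<cdot> r) \<cdot> h1 = y" "(p3 \<cdot> r) \<cdot> h1 = z'"
    and h2: "(p1 \<cdot> r) \<cdot> h2 = x" "(p2 \<cdot> r) \<cdot> h2 = y'" "(p3 \<cdot> r) \<cdot> h2 = z"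
    and h3: "(p1 \<cdot> r) \<cdot> h3 = x'" "(p2 \<cdot> r) \<cdot> h3 = y" "(p3 \<cdot> r) \<cdot> h3 = z"
    unfolding mem3_def hom_def by metis
  obtain pi1 pi2 where pi: "is_product2 C pi1 pi2" "cd pi1 = dm r" "cd pi2 = dm r"
    using product_exists dom_in_Ob[OF mono_arr[OF r(1)]] by metis
  interpret product_relations C pi1 pi2
    by unfold_locales (use pi in simp_all)
  have f: "ar (p1 \<cdot> r)" "ar (p2 \<cdot> r)" "ar (p3 \<cdot> r)"
    "dm (p1 \<cdot> r) = cd pi1" "dm (p2 \<cdot> r) = cd pi1" "dm (p3 \<cdot> r) = cd pi1"
    using product3D[OF pr] r mono_arr pi by auto
  have hs: "ar h1" "ar h2" "ar h3" "cd h1 = cd pi1" "cd h2 = cd pi1" "cd h3 = cd pi1"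
    "dm h2 = dm h1" "dm h3 = dm h1"
    using h pi by simp_all
  have agree: "(p1 \<cdot> r) \<cdot> h1 = (p1 \<cdot> r) \<cdot> h2" "(p2 \<cdot> r) \<cdot> h1 = (p2 \<cdot> r) \<cdot> h3"
    "(p3 \<cdot> r) \<cdot> h2 = (p3 \<cdot> r) \<cdot> h3"
    using h1 h2 h3 by simp_all
  obtain q d where q: "regular_epi C q" "ar q" "cd q = dm h1" "ar d" "dm d = dm q" "cd d = cd pi1"
      "(p1 \<cdot> r) \<cdot> d = (p1 \<cdot> r) \<cdot> h1 \<cdot> q" "(p2 \<cdot> r) \<cdot> d = (p2 \<cdot> r) \<cdot> h1 \<cdot> q"
      "(p3 \<cdot> r) \<cdot> d = (p3 \<cdot> r) \<cdot> h3 \<cdot> q"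
    by (rule kernel_majority[OF hyp f hs agree])
  have "mem3 C p1 p2 p3 r (x \<cdot> q) (y \<cdot> q) (z \<cdot> q)"
    unfolding mem3_def hom_def
    using q h f pi h1 h3 by auto
  then show "mem3 C p1 p2 p3 r x y z"
    by (rule mem3_regular_epi_descend[OF pr r q(1), rotated 3])
      (use \<open>hom C x S (cd p1)\<close> \<open>hom C y S (cd p2)\<close> \<open>hom C z S (cd p3)\<close> q h in simp_all)
qed

theorem lemma3p2:
  fixes C :: "('o, 'a) cat"
  assumes "regular_category C"
    and "modular_distrib_hyp C"
  shows "majority_category C"
proof -
  interpret regular_category_ctx C
    using assms(1) by unfold_locales (simp_all add: regular_category_def)
  show ?thesis
    unfolding majority_category_def using majority_selecting[OF assms(2)] by blast
qed

end
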